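(* Let $X$ be a connected quandle of type $t<\infty$. Then for all $x,y\in X$, $e_x^{t}=e_y^{t}$ in $\mathrm{As}(X)$, and this element lies in the center of $\mathrm{As}(X)$.
   Context: A quandle is a set $X$ with a binary operation $\lhd$ such that $a\lhd a=a$ for all $a$, each map $x\mapsto x\lhd a$ is a bijection of $X$, and $(a\lhd b)\lhd c=(a\lhd c)\lhd(b\lhd c)$ for all $a,b,c$. The adjoint group $\mathrm{As}(X)$ is the group with generators $e_x$ ($x\in X$) and relations $e_{x\lhd y}=e_y^{-1}e_xe_y$. It acts on $X$ from the right by $x\cdot e_y=x\lhd y$; $X$ is connected if this action is transitive. $x\lhd^N y$ denotes the $N$-fold application of $\bullet\lhd y$ to $x$; $X$ is of type $t$ if $t$ is the smallest positive integer $N$ with $x\lhd^N y=x$ for all $x,y\in X$. *)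

theory Defs
  imports "HOL-Algebra.Group"
begin

text \<open>A quandle on the carrier set X with operation op (op a b stands for a \<lhd> b).\<close>
definition quandle :: "'a set \<Rightarrow> ('a \<Rightarrow> 'a \<Rightarrow> 'a) \<Rightarrow> bool" where
  "quandle X op \<longleftrightarrow>
     (\<forall>a\<in>X. \<forall>b\<in>X. op a b \<in> X) \<and>
     (\<forall>a\<in>X. op a a = a) \<and>
     (\<forall>b\<in>X. bij_betw (\<lambda>x. op x b) X X) \<and>
     (\<forall>a\<in>X. \<forall>b\<in>X. \<forall>c\<in>X. op (op a b) c = op (op a c) (op b c))"

text \<open>Words in the generators: (x, True) stands for e_x and (x, False) for e_x inverse.\<close>
definition words :: "'a set \<Rightarrow> ('a \<times> bool) list set" where
  "words X = {w. set w \<subseteq> X \<times> UNIV}"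

inductive_set as_rel :: "'a set \<Rightarrow> ('a \<Rightarrow> 'a \<Rightarrow> 'a) \<Rightarrow> (('a \<times> bool) list \<times> ('a \<times> bool) list) set"
  for X op where
  refl: "w \<in> words X \<Longrightarrow> (w, w) \<in> as_rel X op"
| sym: "(u, v) \<in> as_rel X op \<Longrightarrow> (v, u) \<in> as_rel X op"
| trans: "(u, v) \<in> as_rel X op \<Longrightarrow> (v, w) \<in> as_rel X op \<Longrightarrow> (u, w) \<in> as_rel X op"
| cong: "(u, v) \<in> as_rel X op \<Longrightarrow> a \<in> words X \<Longrightarrow> b \<in> words X \<Longrightarrow>
         (a @ u @ b, a @ v @ b) \<in> as_rel X op"
| cancel: "x \<in> X \<Longrightarrow> ([(x, s), (x, \<not> s)], []) \<in> as_rel X op"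
| conj: "x \<in> X \<Longrightarrow> y \<in> X \<Longrightarrow>
         ([(op x y, True)], [(y, False), (x, True), (y, True)]) \<in> as_rel X op"

definition adjoint_group :: "'a set \<Rightarrow> ('a \<Rightarrow> 'a \<Rightarrow> 'a) \<Rightarrow> ('a \<times> bool) list set monoid" where
  "adjoint_group X op =
     \<lparr> carrier = words X // as_rel X op,
       mult = (\<lambda>A B. as_rel X op `` {a @ b | a b. a \<in> A \<and> b \<in> B}),
       one = as_rel X op `` {[]} \<rparr>"

definition gen :: "'a set \<Rightarrow> ('a \<Rightarrow> 'a \<Rightarrow> 'a) \<Rightarrow> 'a \<Rightarrow> ('a \<times> bool) list set" where
  "gen X op x = as_rel X op `` {[(x, True)]}"

text \<open>Connectedness: the action of As(X) on X (generated by the maps x \<mapsto> x \<lhd> y and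
  their inverses) is transitive, i.e. any two elements are related by the reflexive
  transitive closure of the symmetric relation a ~ a \<lhd> b.\<close>
definition quandle_connected :: "'a set \<Rightarrow> ('a \<Rightarrow> 'a \<Rightarrow> 'a) \<Rightarrow> bool" where
  "quandle_connected X op \<longleftrightarrow>
     (\<forall>x\<in>X. \<forall>y\<in>X. (x, y) \<in> ({(a, op a b) | a b. a \<in> X \<and> b \<in> X} \<union>
                              {(op a b, a) | a b. a \<in> X \<and> b \<in> X})\<^sup>*)"

definition quandle_type :: "'a set \<Rightarrow> ('a \<Rightarrow> 'a \<Rightarrow> 'a) \<Rightarrow> nat \<Rightarrow> bool" where
  "quandle_type X op t \<longleftrightarrow>
     t > 0 \<and> (\<forall>x\<in>X. \<forall>y\<in>X. ((\<lambda>z. op z y) ^^ t) x = x) \<and>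
     (\<forall>N. 0 < N \<and> N < t \<longrightarrow> \<not> (\<forall>x\<in>X. \<forall>y\<in>X. ((\<lambda>z. op z y) ^^ N) x = x))"

end

theory Submission
  imports Defs
begin

text \<open>
  The quandle relation, read as \<open>e\<^sub>b e\<^bsub>a\<lhd>b\<^esub> = e\<^sub>a e\<^sub>b\<close>, lets a letter \<open>e\<^sub>y\<close> pass to the right
  of \<open>e\<^sub>x\<^sup>n\<close> at the price of becoming \<open>e\<^bsub>y\<lhd>\<^sup>nx\<^esub>\<close>; for \<open>n = t\<close> it is unchanged, so \<open>e\<^sub>x\<^sup>t\<close>
  commutes with every generator and is central. Read the other way, the same relation gives
  \<open>e\<^sub>b e\<^bsub>a\<lhd>b\<^esub>\<^sup>t = e\<^sub>a\<^sup>t e\<^sub>b\<close>, and centrality of \<open>e\<^sub>a\<^sup>t\<close> yields \<open>e\<^bsub>a\<lhd>b\<^esub>\<^sup>t = e\<^sub>a\<^sup>t\<close>; connectedness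
  propagates this equality to all pairs of elements.
\<close>

lemma words_append [simp]: "a @ b \<in> words X \<longleftrightarrow> a \<in> words X \<and> b \<in> words X"
  by (auto simp: words_def)

lemma words_Cons [simp]: "l # b \<in> words X \<longleftrightarrow> fst l \<in> X \<and> b \<in> words X"
  by (cases l) (auto simp: words_def)

lemma words_Nil [simp]: "[] \<in> words X"
  by (simp add: words_def)

lemma words_replicate [simp]: "x \<in> X \<Longrightarrow> replicate n (x, s) \<in> words X"
  by (auto simp: words_def)

lemma quandle_closed: "quandle X op \<Longrightarrow> a \<in> X \<Longrightarrow> b \<in> X \<Longrightarrow> op a b \<in> X"
  unfolding quandle_def by blast

context
  fixes X :: "'a set" and op :: "'a \<Rightarrow> 'a \<Rightarrow> 'a"
  assumes q: "quandle X op"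
begin

lemma as_rel_words: "(u, v) \<in> as_rel X op \<Longrightarrow> u \<in> words X \<and> v \<in> words X"
proof (induction rule: as_rel.induct)
  case (conj x y)
  then show ?case using quandle_closed[OF q] by simp
qed simp_all

lemma as_rel_equiv: "equiv (words X) (as_rel X op)"
  unfolding equiv_def refl_on_def sym_def trans_def
  by (auto dest: as_rel_words intro: as_rel.refl as_rel.sym as_rel.trans)

lemma as_rel_append:
  assumes "(u, v) \<in> as_rel X op" and "(u', v') \<in> as_rel X op"
  shows "(u @ u', v @ v') \<in> as_rel X op"
proof -
  have "(u @ u', v @ u') \<in> as_rel X op"
    using as_rel.cong[OF assms(1), of "[]" u'] as_rel_words[OF assms(2)] by simp
  moreover have "(v @ u', v @ v') \<in> as_rel X op"
    using as_rel.cong[OF assms(2), of v "[]"] as_rel_words[OF assms(1)] by simp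
  ultimately show ?thesis by (rule as_rel.trans)
qed

lemma as_rel_Cons: "(u, v) \<in> as_rel X op \<Longrightarrow> fst l \<in> X \<Longrightarrow> (l # u, l # v) \<in> as_rel X op"
  using as_rel_append[OF as_rel.refl[of "[l]"]] by simp

lemma as_rel_cancel_prefix:
  assumes "x \<in> X" and "w \<in> words X"
  shows "((x, s) # (x, \<not> s) # w, w) \<in> as_rel X op"
  using as_rel_append[OF as_rel.cancel[OF assms(1), of s] as_rel.refl[OF assms(2)]] by simp

lemma as_rel_Cons_cancel:
  assumes x: "x \<in> X" and uv: "((x, s) # u, (x, s) # v) \<in> as_rel X op"
  shows "(u, v) \<in> as_rel X op"
proof -
  have u: "u \<in> words X" and v: "v \<in> words X" using as_rel_words[OF uv] by auto
  have "((x, \<not> s) # (x, s) # u, (x, \<not> s) # (x, s) # v) \<in> as_rel X op"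
    using as_rel_Cons[OF uv] x by simp
  then show ?thesis
    using as_rel_cancel_prefix[OF x u, of "\<not> s"] as_rel_cancel_prefix[OF x v, of "\<not> s"]
    by (metis (full_types) as_rel.sym as_rel.trans)
qed

lemma adjoint_group_mult_classes:
  assumes u: "u \<in> words X" and v: "v \<in> words X"
  shows "as_rel X op `` {u} \<otimes>\<^bsub>adjoint_group X op\<^esub> as_rel X op `` {v} = as_rel X op `` {u @ v}"
proof -
  have "as_rel X op `` {a @ b | a b. a \<in> as_rel X op `` {u} \<and> b \<in> as_rel X op `` {v}}
        = as_rel X op `` {u @ v}"
  proof (intro equalityI subsetI)
    fix z assume "z \<in> as_rel X op `` {a @ b | a b. a \<in> as_rel X op `` {u} \<and> b \<in> as_rel X op `` {v}}"
    then obtain a b where "(u, a) \<in> as_rel X op" "(v, b) \<in> as_rel X op" "(a @ b, z) \<in> as_rel X op"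
      by blast
    then show "z \<in> as_rel X op `` {u @ v}" using as_rel_append as_rel.trans by blast
  qed (use u v as_rel.refl in blast)
  then show ?thesis by (simp add: adjoint_group_def)
qed

lemma gen_pow_class:
  assumes x: "x \<in> X"
  shows "gen X op x [^]\<^bsub>adjoint_group X op\<^esub> n = as_rel X op `` {replicate n (x, True)}"
proof (induction n)
  case 0
  then show ?case by (simp add: adjoint_group_def)
next
  case (Suc n)
  have "gen X op x [^]\<^bsub>adjoint_group X op\<^esub> Suc n
        = gen X op x [^]\<^bsub>adjoint_group X op\<^esub> n \<otimes>\<^bsub>adjoint_group X op\<^esub> gen X op x"
    by simp
  also have "\<dots> = as_rel X op `` {replicate n (x, True)} \<otimes>\<^bsub>adjoint_group X op\<^esub> as_rel X op `` {[(x, True)]}"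
    by (simp only: Suc.IH) (simp only: gen_def)
  also have "\<dots> = as_rel X op `` {replicate (Suc n) (x, True)}"
    using adjoint_group_mult_classes x by (simp add: replicate_append_same)
  finally show ?case .
qed

lemma gen_swap:
  assumes a: "a \<in> X" and b: "b \<in> X"
  shows "([(b, True), (op a b, True)], [(a, True), (b, True)]) \<in> as_rel X op"
proof -
  have "([(b, True), (op a b, True)], [(b, True), (b, False), (a, True), (b, True)]) \<in> as_rel X op"
    using as_rel_Cons[OF as_rel.conj[OF a b], of "(b, True)"] b by simp
  moreover have "([(b, True), (b, False), (a, True), (b, True)], [(a, True), (b, True)]) \<in> as_rel X op"
    using as_rel_cancel_prefix[of b "[(a, True), (b, True)]" True] a b by simp
  ultimately show ?thesis by (rule as_rel.trans)
qed

lemma gen_past_gen_power: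
  assumes x: "x \<in> X"
  shows "y \<in> X \<Longrightarrow> ((y, True) # replicate n (x, True),
           replicate n (x, True) @ [(((\<lambda>z. op z x) ^^ n) y, True)]) \<in> as_rel X op"
proof (induction n arbitrary: y)
  case 0
  then show ?case using as_rel.refl[of "[(y, True)]"] by simp
next
  case (Suc n)
  have y': "op y x \<in> X" using quandle_closed[OF q Suc.prems x] .
  have "((y, True) # (x, True) # replicate n (x, True),
         (x, True) # (op y x, True) # replicate n (x, True)) \<in> as_rel X op"
    using as_rel_append[OF as_rel.sym[OF gen_swap[OF Suc.prems x]] as_rel.refl, of "replicate n (x, True)"]
      x by simp
  moreover have "((x, True) # (op y x, True) # replicate n (x, True),
      (x, True) # replicate n (x, True) @ [(((\<lambda>z. op z x) ^^ n) (op y x), True)]) \<in> as_rel X op"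
    using as_rel_Cons[OF Suc.IH[OF y']] x by simp
  ultimately show ?case
    by (simp add: funpow_Suc_right del: funpow.simps) (rule as_rel.trans)
qed

lemma gen_power_past_gen:
  assumes a: "a \<in> X" and b: "b \<in> X"
  shows "((b, True) # replicate n (op a b, True), replicate n (a, True) @ [(b, True)]) \<in> as_rel X op"
proof (induction n)
  case 0
  then show ?case using as_rel.refl[of "[(b, True)]"] b by simp
next
  case (Suc n)
  have "((b, True) # (op a b, True) # replicate n (op a b, True),
         (a, True) # (b, True) # replicate n (op a b, True)) \<in> as_rel X op"
    using as_rel_append[OF gen_swap[OF a b] as_rel.refl, of "replicate n (op a b, True)"]
      quandle_closed[OF q a b] by simp
  moreover have "((a, True) # (b, True) # replicate n (op a b, True),
                  (a, True) # replicate n (a, True) @ [(b, True)]) \<in> as_rel X op"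
    using as_rel_Cons[OF Suc.IH] a by simp
  ultimately show ?case by simp (rule as_rel.trans)
qed

context
  fixes t :: nat
  assumes ty: "quandle_type X op t"
begin

lemma gen_commutes_type_power:
  assumes x: "x \<in> X" and y: "y \<in> X"
  shows "((y, True) # replicate t (x, True), replicate t (x, True) @ [(y, True)]) \<in> as_rel X op"
  using gen_past_gen_power[OF x y, of t] ty x y unfolding quandle_type_def by simp

lemma letter_commutes_type_power:
  assumes x: "x \<in> X" and y: "y \<in> X"
  shows "((y, s) # replicate t (x, True), replicate t (x, True) @ [(y, s)]) \<in> as_rel X op"
proof (cases s)
  case True
  then show ?thesis using gen_commutes_type_power[OF x y] by simp
next
  case False
  let ?R = "replicate t (x, True)"
  have "((y, True) # (y, False) # ?R, ?R) \<in> as_rel X op"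
    using as_rel_cancel_prefix[OF y, of ?R True] x by simp
  moreover have "((y, True) # ?R @ [(y, False)], ?R @ [(y, True), (y, False)]) \<in> as_rel X op"
    using as_rel_append[OF gen_commutes_type_power[OF x y] as_rel.refl, of "[(y, False)]"] y by simp
  moreover have "(?R @ [(y, True), (y, False)], ?R) \<in> as_rel X op"
    using as_rel_append[OF as_rel.refl as_rel.cancel[OF y], of ?R True] x by simp
  ultimately have "((y, True) # (y, False) # ?R, (y, True) # ?R @ [(y, False)]) \<in> as_rel X op"
    by (meson as_rel.sym as_rel.trans)
  then show ?thesis using as_rel_Cons_cancel[OF y] False by simp
qed

lemma word_commutes_type_power:
  assumes x: "x \<in> X"
  shows "w \<in> words X \<Longrightarrow> (w @ replicate t (x, True), replicate t (x, True) @ w) \<in> as_rel X op"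
proof (induction w)
  case Nil
  then show ?case using as_rel.refl[of "replicate t (x, True)"] x by simp
next
  case (Cons l w)
  obtain y s where l: "l = (y, s)" and y: "y \<in> X" and w: "w \<in> words X"
    using Cons.prems by (cases l) auto
  have "(l # w @ replicate t (x, True), l # replicate t (x, True) @ w) \<in> as_rel X op"
    using as_rel_Cons[OF Cons.IH[OF w]] l y by simp
  moreover have "(l # replicate t (x, True) @ w, replicate t (x, True) @ l # w) \<in> as_rel X op"
    using as_rel_append[OF letter_commutes_type_power[OF x y] as_rel.refl[OF w]] l by simp
  ultimately show ?case by simp (rule as_rel.trans)
qed

lemma type_power_quandle_op:
  assumes a: "a \<in> X" and b: "b \<in> X"
  shows "(replicate t (op a b, True), replicate t (a, True)) \<in> as_rel X op"
proof -
  have "((b, True) # replicate t (op a b, True), replicate t (a, True) @ [(b, True)]) \<in> as_rel X op"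
    using gen_power_past_gen[OF a b] .
  moreover have "(replicate t (a, True) @ [(b, True)], (b, True) # replicate t (a, True)) \<in> as_rel X op"
    using as_rel.sym[OF word_commutes_type_power[OF a, of "[(b, True)]"]] b by simp
  ultimately show ?thesis using as_rel_Cons_cancel[OF b] as_rel.trans by blast
qed

lemma type_power_connected:
  assumes c: "quandle_connected X op" and x: "x \<in> X" and y: "y \<in> X"
  shows "(replicate t (x, True), replicate t (y, True)) \<in> as_rel X op"
proof -
  have "(x, y) \<in> ({(a, op a b) | a b. a \<in> X \<and> b \<in> X} \<union> {(op a b, a) | a b. a \<in> X \<and> b \<in> X})\<^sup>*"
    using c x y unfolding quandle_connected_def by blast
  then show ?thesis
  proof (induction rule: rtrancl_induct)
    case base
    then show ?case using as_rel.refl[of "replicate t (x, True)"] x by simp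
  next
    case (step u v)
    then show ?case
      using type_power_quandle_op as_rel.sym as_rel.trans by blast
  qed
qed

end

end

theorem lemma3p5:
  fixes X :: "'a set" and op :: "'a \<Rightarrow> 'a \<Rightarrow> 'a" and t :: nat
  assumes "quandle X op" and "quandle_connected X op" and "quandle_type X op t"
  shows "\<forall>x\<in>X. \<forall>y\<in>X.
           gen X op x [^]\<^bsub>adjoint_group X op\<^esub> t = gen X op y [^]\<^bsub>adjoint_group X op\<^esub> t \<and>
           (\<forall>g\<in>carrier (adjoint_group X op).
              g \<otimes>\<^bsub>adjoint_group X op\<^esub> (gen X op x [^]\<^bsub>adjoint_group X op\<^esub> t) =
              (gen X op x [^]\<^bsub>adjoint_group X op\<^esub> t) \<otimes>\<^bsub>adjoint_group X op\<^esub> g)"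
proof (intro ballI conjI)
  fix x y assume x: "x \<in> X" and y: "y \<in> X"
  note eq = as_rel_equiv[OF assms(1)]
  show "gen X op x [^]\<^bsub>adjoint_group X op\<^esub> t = gen X op y [^]\<^bsub>adjoint_group X op\<^esub> t"
    unfolding gen_pow_class[OF assms(1) x] gen_pow_class[OF assms(1) y]
    using equiv_class_eq[OF eq type_power_connected[OF assms(1,3,2) x y]] .
  fix g assume "g \<in> carrier (adjoint_group X op)"
  then obtain w where w: "w \<in> words X" and g: "g = as_rel X op `` {w}"
    unfolding adjoint_group_def by (auto elim: quotientE)
  show "g \<otimes>\<^bsub>adjoint_group X op\<^esub> (gen X op x [^]\<^bsub>adjoint_group X op\<^esub> t) =
        (gen X op x [^]\<^bsub>adjoint_group X op\<^esub> t) \<otimes>\<^bsub>adjoint_group X op\<^esub> g"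
    unfolding gen_pow_class[OF assms(1) x] g
    using equiv_class_eq[OF eq word_commutes_type_power[OF assms(1,3) x w]] w x
    by (simp add: adjoint_group_mult_classes[OF assms(1)])
qed

end
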